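(* Let $\xi>0$ be real, let $b\ge0$ and $N\ge2$ be integers, and for integers $0\le d\le N-1$ and $0\le l\le 2d$ put \begin{equation*} f_{d,l} = \exp\left(\frac{(2b+1)(d^2+d)\xi}{2N}\right) \cdot 2\sinh\left(\frac{(2d+1)\xi}{2N}\right) \cdot \prod_{k=1}^{l}4 \sinh\left(\frac{(2d+1+k)\xi}{2N}\right) \sinh\left(\frac{(2d+1-k)\xi}{2N}\right). \end{equation*} Then for all integers $l,d$ with $0\le d\le N-2$ and $0\le l\le2d$ we have $f_{d,l}<f_{N-1,l}$. *)

theory Defs
  imports Complex_Main
begin

definition f :: "real \<Rightarrow> nat \<Rightarrow> nat \<Rightarrow> nat \<Rightarrow> nat \<Rightarrow> real" where
  "f \<xi> b N d l =
     exp ((2 * real b + 1) * (real d ^ 2 + real d) * \<xi> / (2 * real N))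
     * (2 * sinh ((2 * real d + 1) * \<xi> / (2 * real N)))
     * (\<Prod>k=1..l. 4 * sinh ((2 * real d + 1 + real k) * \<xi> / (2 * real N))
                     * sinh ((2 * real d + 1 - real k) * \<xi> / (2 * real N)))"

end

theory Submission
  imports Defs
begin

(* Every factor of f increases with d once c = \<xi>/(2N) > 0: the exponential and
   sinh((2d+1)c) strictly, and each factor sinh((2d+1+k)c) sinh((2d+1-k)c) of the
   product weakly, as a product of two increasing sinh terms that are positive
   because k \<le> l \<le> 2d < 2d+1. *)

lemma sinh_mult_sinh_pos:
  fixes x k :: real
  assumes "\<bar>k\<bar> < x"
  shows "0 < sinh (x + k) * sinh (x - k)"
  using assms by (intro mult_pos_pos) (simp_all add: abs_less_iff)

lemma sinh_mult_sinh_mono: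
  fixes x y k :: real
  assumes "\<bar>k\<bar> \<le> x" and "x \<le> y"
  shows "sinh (x + k) * sinh (x - k) \<le> sinh (y + k) * sinh (y - k)"
proof (rule mult_mono)
  show "sinh (x + k) \<le> sinh (y + k)" and "sinh (x - k) \<le> sinh (y - k)"
    using assms(2) by simp_all
  show "0 \<le> sinh (y + k)" and "0 \<le> sinh (x - k)"
    using assms by simp_all
qed

definition sinh_prod :: "real \<Rightarrow> real \<Rightarrow> nat \<Rightarrow> real" where
  "sinh_prod c x l = (\<Prod>k=1..l. 4 * sinh ((x + real k) * c) * sinh ((x - real k) * c))"

lemma sinh_prod_pos:
  assumes "c > 0" and "real l < x"
  shows "0 < sinh_prod c x l"
  unfolding sinh_prod_def
proof (rule prod_pos)
  fix k assume "k \<in> {1..l}"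
  then have "\<bar>real k * c\<bar> < x * c"
    using assms by simp
  from sinh_mult_sinh_pos[OF this]
  show "0 < 4 * sinh ((x + real k) * c) * sinh ((x - real k) * c)"
    by (simp add: algebra_simps)
qed

lemma sinh_prod_mono:
  assumes "c > 0" and "real l \<le> x" and "x \<le> y"
  shows "sinh_prod c x l \<le> sinh_prod c y l"
  unfolding sinh_prod_def
proof (rule prod_mono)
  fix k assume "k \<in> {1..l}"
  then have k: "\<bar>real k * c\<bar> \<le> x * c"
    using assms by simp
  have "x * c \<le> y * c"
    using assms by simp
  from sinh_mult_sinh_mono[OF k this]
  show "0 \<le> 4 * sinh ((x + real k) * c) * sinh ((x - real k) * c) \<and>
        4 * sinh ((x + real k) * c) * sinh ((x - real k) * c)
          \<le> 4 * sinh ((y + real k) * c) * sinh ((y - real k) * c)"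
    using k assms by (simp add: algebra_simps)
qed

lemma f_eq_sinh_prod:
  "f \<xi> b N d l =
     exp ((2 * real b + 1) * (real d ^ 2 + real d) * (\<xi> / (2 * real N)))
     * (2 * sinh ((2 * real d + 1) * (\<xi> / (2 * real N))))
     * sinh_prod (\<xi> / (2 * real N)) (2 * real d + 1) l"
  unfolding f_def sinh_prod_def by (simp add: mult.assoc)

lemma exp_mult_sinh_strict_mono:
  fixes a c x y :: real
  assumes "a \<ge> 0" and "c > 0" and "0 \<le> x" and "x < y"
  shows "exp (a * (x ^ 2 + x) * c) * (2 * sinh ((2 * x + 1) * c))
       < exp (a * (y ^ 2 + y) * c) * (2 * sinh ((2 * y + 1) * c))"
proof (rule mult_le_less_imp_less)
  have "x ^ 2 + x \<le> y ^ 2 + y"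
    using assms by (intro add_mono power_mono) auto
  then show "exp (a * (x ^ 2 + x) * c) \<le> exp (a * (y ^ 2 + y) * c)"
    using assms by (simp add: mult_right_mono mult_left_mono)
  show "2 * sinh ((2 * x + 1) * c) < 2 * sinh ((2 * y + 1) * c)"
    and "0 \<le> 2 * sinh ((2 * x + 1) * c)"
    using assms by simp_all
qed simp

theorem corollary3p2:
  fixes \<xi> :: real and b N d l :: nat
  assumes "\<xi> > 0" and "N \<ge> 2" and "d \<le> N - 2" and "l \<le> 2 * d"
  shows "f \<xi> b N d l < f \<xi> b N (N - 1) l"
proof -
  define c where "c = \<xi> / (2 * real N)"
  define D where "D = N - 1"
  have c: "c > 0" and dD: "real d < real D" and l: "real l < 2 * real d + 1"
    using assms unfolding c_def D_def by auto
  have head_less: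
    "exp ((2 * real b + 1) * (real d ^ 2 + real d) * c) * (2 * sinh ((2 * real d + 1) * c))
     < exp ((2 * real b + 1) * (real D ^ 2 + real D) * c) * (2 * sinh ((2 * real D + 1) * c))"
    using c dD by (intro exp_mult_sinh_strict_mono) auto
  have head_nonneg:
    "0 \<le> exp ((2 * real b + 1) * (real d ^ 2 + real d) * c) * (2 * sinh ((2 * real d + 1) * c))"
    using c by simp
  have prod_le: "sinh_prod c (2 * real d + 1) l \<le> sinh_prod c (2 * real D + 1) l"
    using c l dD by (intro sinh_prod_mono) auto
  show ?thesis
    unfolding f_eq_sinh_prod c_def[symmetric] D_def[symmetric]
    using mult_less_le_imp_less[OF head_less prod_le head_nonneg sinh_prod_pos[OF c l]] .
qed

end
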